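(* Let $0<p<e^{-1}$ and let $\bar Q=(\bar q_{j,k})_{j,k\geq1}$ be the generator on $\mathbb N=\{1,2,\dots\}$ with $\bar q_{j,k}=\binom{j-1}{k-1}p^k(1-p)^{j-k}$ for $1\leq k\leq j-1$, $\bar q_{j,j+1}=(j+1)p$, $\bar q_{j,j}=p^j-(2+j)p$, and $\bar q_{j,k}=0$ otherwise. Then $\bar Q$ is positive recurrent. *)

theory Defs
  imports "HOL-Analysis.Analysis"
begin

(* A generator Q on a countable state space S \<subseteq> nat (q_jk \<ge> 0 for j \<noteq> k,
   q_jj = - q_j \<le> 0).  The (minimal) continuous-time Markov chain it generates is
   the jump chain with transition matrix Pi plus independent exponential holding
   times of mean 1/q_j.  We define the mean return time E_i[T_i] of the minimal chain
   explicitly from this construction as a sum over excursions. *)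

definition jump_prob :: "(nat \<Rightarrow> nat \<Rightarrow> real) \<Rightarrow> nat \<Rightarrow> nat \<Rightarrow> real" where
  "jump_prob Q j k =
     (if Q j j = 0 then (if k = j then 1 else 0)
      else (if k = j then 0 else Q j k / (- Q j j)))"

(* probability that the jump chain started at i visits exactly i, xs_1, ..., xs_m, i *)
definition excursion_prob :: "(nat \<Rightarrow> nat \<Rightarrow> real) \<Rightarrow> nat \<Rightarrow> nat list \<Rightarrow> ennreal" where
  "excursion_prob Q i xs =
     prod_list (map2 (\<lambda>a b. ennreal (jump_prob Q a b)) (i # xs) (xs @ [i]))"

definition excursion_time :: "(nat \<Rightarrow> nat \<Rightarrow> real) \<Rightarrow> nat \<Rightarrow> nat list \<Rightarrow> ennreal" where
  "excursion_time Q i xs = sum_list (map (\<lambda>x. inverse (ennreal (- Q x x))) (i # xs))"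

definition excursions :: "nat set \<Rightarrow> nat \<Rightarrow> nat list set" where
  "excursions S i = {xs. set xs \<subseteq> S - {i}}"

definition return_prob :: "(nat \<Rightarrow> nat \<Rightarrow> real) \<Rightarrow> nat set \<Rightarrow> nat \<Rightarrow> ennreal" where
  "return_prob Q S i = (\<Sum>\<^sub>\<infinity>xs\<in>excursions S i. excursion_prob Q i xs)"

(* E_i[T_i], T_i = first return time to i of the minimal chain (= \<infinity> if the chain
   fails to return with positive probability, e.g. by explosion) *)
definition mean_return_time :: "(nat \<Rightarrow> nat \<Rightarrow> real) \<Rightarrow> nat set \<Rightarrow> nat \<Rightarrow> ennreal" where
  "mean_return_time Q S i =
     (if return_prob Q S i = 1
      then (\<Sum>\<^sub>\<infinity>xs\<in>excursions S i. excursion_prob Q i xs * excursion_time Q i xs)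
      else top)"

definition positive_recurrent_state :: "(nat \<Rightarrow> nat \<Rightarrow> real) \<Rightarrow> nat set \<Rightarrow> nat \<Rightarrow> bool" where
  "positive_recurrent_state Q S i \<longleftrightarrow> mean_return_time Q S i < top"

definition positive_recurrent :: "(nat \<Rightarrow> nat \<Rightarrow> real) \<Rightarrow> nat set \<Rightarrow> bool" where
  "positive_recurrent Q S \<longleftrightarrow> (\<forall>i\<in>S. positive_recurrent_state Q S i)"

definition Qbar :: "real \<Rightarrow> nat \<Rightarrow> nat \<Rightarrow> real" where
  "Qbar p j k =
     (if 1 \<le> j \<and> 1 \<le> k then
        (if k \<le> j - 1 then real ((j - 1) choose (k - 1)) * p ^ k * (1 - p) ^ (j - k)
         else if k = j + 1 then real (j + 1) * p
         else if k = j then p ^ j - (2 + real j) * p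
         else 0)
      else 0)"

end

theory Submission
  imports Defs
begin

(*
  Fix a state i and take the Lyapunov function U y = A ln y + L (i - y)_+ + B for y <> i,
  U i = 0.  From a large state x the chain jumps up at rate (x + 1) p, which changes ln x by
  about 1/x, and down at total rate about p to a binomial thinning of x, which changes ln x by
  about ln p.  So the drift of ln x is about p (1 + ln p), negative exactly when p < 1/e; the
  terms L (i - y)_+ and B handle the finitely many remaining states, giving (Q U) x <= -1 for
  all x <> i.  For the jump chain this is a Foster-Lyapunov condition with the expected holding
  time as cost.  It bounds the expected return time, written as a sum over excursions, and,
  since U has finite sublevel sets, a maximum principle for the bounded subharmonic function
  1 - h (h the probability of reaching i) shows that the chain returns to i almost surely.
*)

lemma summable_on_if_sums_bounded:
  fixes f :: "'a \<Rightarrow> real"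
  assumes "\<And>x. x \<in> A \<Longrightarrow> 0 \<le> f x" and "\<And>F. finite F \<Longrightarrow> F \<subseteq> A \<Longrightarrow> sum f F \<le> b"
  shows "f summable_on A"
  using assms by (intro nonneg_bdd_above_summable_on bdd_aboveI[of _ b]) auto

lemma infsum_ennreal:
  fixes f :: "'a \<Rightarrow> real"
  assumes "f summable_on A" and "\<And>x. x \<in> A \<Longrightarrow> 0 \<le> f x"
  shows "(\<Sum>\<^sub>\<infinity>x\<in>A. ennreal (f x)) = ennreal (\<Sum>\<^sub>\<infinity>x\<in>A. f x)"
proof -
  have "(\<Sum>\<^sub>\<infinity>x\<in>A. ennreal (f x)) = (SUP F\<in>{F. finite F \<and> F \<subseteq> A}. \<Sum>x\<in>F. ennreal (f x))"
    by (rule nonneg_infsum_complete) simp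
  also have "\<dots> = (SUP F\<in>{F. finite F \<and> F \<subseteq> A}. ennreal (sum f F))"
    using assms(2) by (intro SUP_cong refl sum_ennreal) auto
  also have "\<dots> = ennreal (\<Sum>\<^sub>\<infinity>x\<in>A. f x)"
    using infsum_nonneg_is_SUPREMUM_ennreal[OF assms] by simp
  finally show ?thesis .
qed

lemma finite_Cons_preimage: "finite X \<Longrightarrow> finite {ys. y # ys \<in> X}"
  by (rule finite_subset[of _ "tl ` X"]) (force simp: image_iff)+

lemma finite_list_set_induct [consumes 1, case_names step]:
  assumes "finite X"
    and step: "\<And>X. finite X \<Longrightarrow> (\<And>y. y \<in> hd ` (X - {[]}) \<Longrightarrow> Q {ys. y # ys \<in> X}) \<Longrightarrow> Q X"
  shows "Q X"
  using assms(1)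
proof (induction "\<Sum>xs\<in>X. length xs" arbitrary: X rule: less_induct)
  case less
  show ?case
  proof (rule step[OF less.prems])
    fix y assume "y \<in> hd ` (X - {[]})"
    define Z where "Z = {ys. y # ys \<in> X}"
    have Z: "finite Z" "Z \<noteq> {}"
      using finite_Cons_preimage[OF less.prems] \<open>y \<in> hd ` (X - {[]})\<close>
      by (auto simp: Z_def) (metis list.collapse)
    have "(\<Sum>ys\<in>Z. length ys) < (\<Sum>ys\<in>Z. length (y # ys))"
      using Z by (intro sum_strict_mono) auto
    also have "\<dots> = (\<Sum>xs\<in>Cons y ` Z. length xs)"
      by (simp add: sum.reindex)
    also have "\<dots> \<le> (\<Sum>xs\<in>X. length xs)"
      using less.prems by (intro sum_mono2) (auto simp: Z_def)
    finally show "Q Z"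
      using less.hyps Z by blast
  qed
qed

lemma sum_list_set_split:
  assumes "finite X"
  shows "sum f X = (if [] \<in> X then f [] else 0)
                   + (\<Sum>y\<in>hd ` (X - {[]}). \<Sum>ys\<in>{ys. y # ys \<in> X}. f (y # ys))"
proof -
  have "sum f (X - {[]}) = (\<Sum>(y, ys)\<in>(SIGMA y:hd ` (X - {[]}). {ys. y # ys \<in> X}). f (y # ys))"
    by (rule sum.reindex_bij_witness[of _ "\<lambda>(y, ys). y # ys" "\<lambda>xs. (hd xs, tl xs)"])
       (auto simp: image_iff neq_Nil_conv)
  also have "\<dots> = (\<Sum>y\<in>hd ` (X - {[]}). \<Sum>ys\<in>{ys. y # ys \<in> X}. f (y # ys))"
    using assms by (intro sum.Sigma[symmetric]) (simp_all add: finite_Cons_preimage)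
  finally show ?thesis
    using assms by (cases "[] \<in> X") (simp_all add: sum.remove)
qed

locale row_finite_chain =
  fixes S :: "'a set" and succs :: "'a \<Rightarrow> 'a set" and P :: "'a \<Rightarrow> 'a \<Rightarrow> real" and i :: 'a
  assumes target_in_S: "i \<in> S"
    and finite_succs: "x \<in> S \<Longrightarrow> finite (succs x)"
    and succs_subset: "x \<in> S \<Longrightarrow> succs x \<subseteq> S"
    and P_nonneg: "x \<in> S \<Longrightarrow> 0 \<le> P x y"
    and P_outside_succs: "x \<in> S \<Longrightarrow> y \<notin> succs x \<Longrightarrow> P x y = 0"
    and row_sum: "x \<in> S \<Longrightarrow> (\<Sum>y\<in>succs x. P x y) = 1"
begin

abbreviation T :: "'a set" where
  "T \<equiv> S - {i}"

definition path_prob :: "'a \<Rightarrow> 'a list \<Rightarrow> real" where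
  "path_prob x xs = prod_list (map2 P (x # xs) (xs @ [i]))"

(* the probability of reaching i in at least one step; for x = i the return probability *)
definition hit_prob :: "'a \<Rightarrow> real" where
  "hit_prob x = (\<Sum>\<^sub>\<infinity>xs\<in>lists T. path_prob x xs)"

lemma path_prob_Nil [simp]: "path_prob x [] = P x i"
  and path_prob_Cons [simp]: "path_prob x (y # ys) = P x y * path_prob y ys"
  by (simp_all add: path_prob_def)

lemma path_prob_nonneg: "x \<in> S \<Longrightarrow> xs \<in> lists T \<Longrightarrow> 0 \<le> path_prob x xs"
  by (induction xs arbitrary: x) (auto simp: P_nonneg)

lemma prod_list_ennreal_path_prob:
  assumes "x \<in> S" and "xs \<in> lists T"
  shows "prod_list (map2 (\<lambda>a b. ennreal (P a b)) (x # xs) (xs @ [i])) = ennreal (path_prob x xs)"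
  using assms
proof (induction xs arbitrary: x)
  case (Cons y ys)
  then show ?case
    using P_nonneg path_prob_nonneg by (simp add: ennreal_mult)
qed simp

lemma sum_P_le_1:
  assumes "x \<in> S"
  shows "(\<Sum>y\<in>Y. P x y) \<le> 1"
proof (cases "finite Y")
  case True
  have "(\<Sum>y\<in>Y. P x y) = (\<Sum>y\<in>Y \<inter> succs x. P x y)"
    using True assms P_outside_succs by (intro sum.mono_neutral_right) auto
  also have "\<dots> \<le> (\<Sum>y\<in>succs x. P x y)"
    using assms finite_succs P_nonneg by (intro sum_mono2) auto
  finally show ?thesis
    using row_sum assms by simp
qed simp

lemma row_sum_minus_target: "x \<in> S \<Longrightarrow> P x i + (\<Sum>y\<in>succs x - {i}. P x y) = 1"
  using row_sum finite_succs P_outside_succs by (cases "i \<in> succs x") (simp_all add: sum_diff1)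

lemma sum_P_mult_le:
  assumes "x \<in> S" "finite Y" "Y \<subseteq> T" "\<And>y. y \<in> T \<Longrightarrow> 0 \<le> f y"
  shows "(\<Sum>y\<in>Y. P x y * f y) \<le> (\<Sum>y\<in>succs x - {i}. P x y * f y)"
proof -
  have "(\<Sum>y\<in>Y. P x y * f y) = (\<Sum>y\<in>Y \<inter> succs x. P x y * f y)"
    using assms(2) P_outside_succs[OF assms(1)] by (intro sum.mono_neutral_right) auto
  also have "\<dots> \<le> (\<Sum>y\<in>succs x - {i}. P x y * f y)"
    using assms finite_succs[OF assms(1)] succs_subset[OF assms(1)] P_nonneg[OF assms(1)]
    by (intro sum_mono2) (auto intro!: mult_nonneg_nonneg)
  finally show ?thesis .
qed

lemma sum_path_prob_le_1:
  assumes "finite X" "X \<subseteq> lists T" "x \<in> S"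
  shows "sum (path_prob x) X \<le> 1"
  using assms
proof (induction X arbitrary: x rule: finite_list_set_induct)
  case (step X)
  define Y where "Y = hd ` (X - {[]})"
  have Y: "finite Y" "Y \<subseteq> T"
    using step.prems step.hyps by (force simp: Y_def neq_Nil_conv)+
  have "sum (path_prob x) X
        = (if [] \<in> X then P x i else 0) + (\<Sum>y\<in>Y. P x y * (\<Sum>ys | y # ys \<in> X. path_prob y ys))"
    using sum_list_set_split[OF step.hyps(1), of "path_prob x"] by (simp add: Y_def sum_distrib_left)
  also have "\<dots> \<le> P x i + (\<Sum>y\<in>Y. P x y)"
  proof (intro add_mono sum_mono)
    fix y assume "y \<in> Y"
    have "{ys. y # ys \<in> X} \<subseteq> lists T" "y \<in> S"
      using step.prems(1) Y \<open>y \<in> Y\<close> by force+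
    then have "(\<Sum>ys | y # ys \<in> X. path_prob y ys) \<le> 1"
      using step.IH \<open>y \<in> Y\<close> unfolding Y_def by blast
    then show "P x y * (\<Sum>ys | y # ys \<in> X. path_prob y ys) \<le> P x y"
      using P_nonneg[OF \<open>x \<in> S\<close>] by (simp add: mult_left_le)
  qed (use P_nonneg[OF \<open>x \<in> S\<close>] in auto)
  also have "\<dots> = (\<Sum>y\<in>insert i Y. P x y)"
    using Y by (subst sum.insert) auto
  also have "\<dots> \<le> 1"
    using sum_P_le_1 step.prems by blast
  finally show ?case .
qed

lemma summable_path_prob: "x \<in> S \<Longrightarrow> path_prob x summable_on lists T"
  by (rule summable_on_if_sums_bounded[where b = 1]) (auto simp: path_prob_nonneg sum_path_prob_le_1)

lemma hit_prob_nonneg: "x \<in> S \<Longrightarrow> 0 \<le> hit_prob x"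
  unfolding hit_prob_def by (intro infsum_nonneg path_prob_nonneg)

lemma hit_prob_le_1: "x \<in> S \<Longrightarrow> hit_prob x \<le> 1"
  unfolding hit_prob_def by (intro infsum_le_finite_sums summable_path_prob sum_path_prob_le_1)

lemma hit_prob_first_step:
  assumes "x \<in> S"
  shows "hit_prob x = P x i + (\<Sum>y\<in>succs x - {i}. P x y * hit_prob y)"
proof -
  have "(path_prob x has_sum P x y * hit_prob y) (Cons y ` lists T)" if "y \<in> succs x - {i}" for y
  proof -
    have "y \<in> S"
      using that succs_subset assms by auto
    then have "((\<lambda>ys. P x y * path_prob y ys) has_sum P x y * hit_prob y) (lists T)"
      unfolding hit_prob_def by (intro has_sum_cmult_right has_sum_infsum summable_path_prob)
    then show ?thesis
      by (subst has_sum_reindex) (auto simp: o_def)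
  qed
  then have "(path_prob x has_sum (\<Sum>y\<in>succs x - {i}. P x y * hit_prob y)) (\<Union>y\<in>succs x - {i}. Cons y ` lists T)"
    using finite_succs[OF assms] by (intro sum_has_sum) auto
  then have "(path_prob x has_sum path_prob x [] + (\<Sum>y\<in>succs x - {i}. P x y * hit_prob y))
               (insert [] (\<Union>y\<in>succs x - {i}. Cons y ` lists T))"
    by (intro has_sum_insert) auto
  moreover have "(path_prob x has_sum s) (insert [] (\<Union>y\<in>succs x - {i}. Cons y ` lists T))
                 \<longleftrightarrow> (path_prob x has_sum s) (lists T)" for s
  proof (rule has_sum_cong_neutral)
    fix xs assume "xs \<in> lists T - insert [] (\<Union>y\<in>succs x - {i}. Cons y ` lists T)"
    then obtain y ys where xs: "xs = y # ys" "y \<in> T" "ys \<in> lists T"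
      by (metis Diff_iff insertCI lists.cases)
    with \<open>xs \<in> _\<close> have "y \<notin> succs x"
      by blast
    then show "path_prob x xs = 0"
      using P_outside_succs[OF assms] xs(1) by simp
  next
    fix xs assume "xs \<in> insert [] (\<Union>y\<in>succs x - {i}. Cons y ` lists T) - lists T"
    then show "path_prob x xs = 0"
      using succs_subset[OF assms] by auto
  qed simp
  ultimately have "(path_prob x has_sum path_prob x [] + (\<Sum>y\<in>succs x - {i}. P x y * hit_prob y)) (lists T)"
    by blast
  from infsumI[OF this] show ?thesis
    by (simp add: hit_prob_def)
qed

lemma sum_path_prob_time_split:
  assumes "finite X"
  shows "(\<Sum>xs\<in>X. path_prob x xs * sum_list (map c (x # xs)))
         = (if [] \<in> X then P x i * c x else 0)
           + (\<Sum>y\<in>hd ` (X - {[]}). P x y * (c x * (\<Sum>ys | y # ys \<in> X. path_prob y ys)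
                  + (\<Sum>ys | y # ys \<in> X. path_prob y ys * sum_list (map c (y # ys)))))"
proof -
  have "(\<Sum>ys | y # ys \<in> X. path_prob x (y # ys) * sum_list (map c (x # y # ys)))
        = (\<Sum>ys | y # ys \<in> X. P x y * (c x * path_prob y ys)
                                + P x y * (path_prob y ys * sum_list (map c (y # ys))))" for y
    by (rule sum.cong) (simp_all add: algebra_simps)
  then show ?thesis
    using sum_list_set_split[OF assms, of "\<lambda>xs. path_prob x xs * sum_list (map c (x # xs))"]
    by (simp add: distrib_left sum.distrib sum_distrib_left)
qed

end

locale foster_chain = row_finite_chain +
  fixes c V :: "'a \<Rightarrow> real"
  assumes c_pos: "x \<in> S \<Longrightarrow> 0 < c x"
    and V_nonneg: "x \<in> S - {i} \<Longrightarrow> 0 \<le> V x"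
    and drift: "x \<in> S - {i} \<Longrightarrow> c x + (\<Sum>y\<in>succs x - {i}. P x y * V y) \<le> V x"
    and finite_sublevel: "finite {x \<in> S - {i}. V x \<le> K}"
begin

lemma sum_path_prob_time_le:
  assumes "finite X" "X \<subseteq> lists T" "x \<in> S"
  shows "(\<Sum>xs\<in>X. path_prob x xs * sum_list (map c (x # xs)))
           \<le> c x + (\<Sum>y\<in>succs x - {i}. P x y * V y)"
  using assms
proof (induction X arbitrary: x rule: finite_list_set_induct)
  case (step X)
  define Y where "Y = hd ` (X - {[]})"
  have Y: "finite Y" "Y \<subseteq> T"
    using step.prems step.hyps by (force simp: Y_def neq_Nil_conv)+
  have tail_bound: "c x * (\<Sum>ys | y # ys \<in> X. path_prob y ys)
                    + (\<Sum>ys | y # ys \<in> X. path_prob y ys * sum_list (map c (y # ys))) \<le> c x + V y"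
    if "y \<in> Y" for y
  proof -
    have tails: "{ys. y # ys \<in> X} \<subseteq> lists T" "y \<in> T"
      using step.prems(1) Y that by force+
    have "(\<Sum>ys | y # ys \<in> X. path_prob y ys) \<le> 1"
      using sum_path_prob_le_1[OF finite_Cons_preimage[OF step.hyps(1)] tails(1), of y] tails(2) by blast
    then have "c x * (\<Sum>ys | y # ys \<in> X. path_prob y ys) \<le> c x"
      using c_pos[OF step.prems(2)] by (simp add: mult_left_le)
    moreover have "(\<Sum>ys | y # ys \<in> X. path_prob y ys * sum_list (map c (y # ys)))
                   \<le> c y + (\<Sum>z\<in>succs y - {i}. P y z * V z)"
      using step.IH that tails unfolding Y_def by blast
    ultimately show ?thesis
      using drift[OF tails(2)] by linarith
  qed
  have "(\<Sum>xs\<in>X. path_prob x xs * sum_list (map c (x # xs)))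
        \<le> P x i * c x + (\<Sum>y\<in>Y. P x y * (c x + V y))"
    unfolding sum_path_prob_time_split[OF step.hyps(1)] Y_def[symmetric]
  proof (rule add_mono[OF _ sum_mono])
    show "(if [] \<in> X then P x i * c x else 0) \<le> P x i * c x"
      using P_nonneg[OF step.prems(2), of i] c_pos[OF step.prems(2)] by simp
  qed (use tail_bound P_nonneg[OF step.prems(2)] in \<open>simp add: mult_left_mono\<close>)
  also have "\<dots> = c x * (\<Sum>y\<in>insert i Y. P x y) + (\<Sum>y\<in>Y. P x y * V y)"
    using Y by (subst sum.insert) (auto simp: distrib_left sum.distrib sum_distrib_left mult.commute)
  also have "\<dots> \<le> c x + (\<Sum>y\<in>succs x - {i}. P x y * V y)"
  proof (rule add_mono)
    show "c x * (\<Sum>y\<in>insert i Y. P x y) \<le> c x"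
      using sum_P_le_1 c_pos step.prems(2) by (simp add: mult_left_le)
    show "(\<Sum>y\<in>Y. P x y * V y) \<le> (\<Sum>y\<in>succs x - {i}. P x y * V y)"
      using Y V_nonneg step.prems(2) by (intro sum_P_mult_le) auto
  qed
  finally show ?case .
qed

lemma path_prob_time_nonneg: "xs \<in> lists T \<Longrightarrow> 0 \<le> path_prob i xs * sum_list (map c (i # xs))"
  using target_in_S c_pos path_prob_nonneg
  by (intro mult_nonneg_nonneg sum_list_nonneg) (auto intro: less_imp_le)

lemma summable_return_time: "(\<lambda>xs. path_prob i xs * sum_list (map c (i # xs))) summable_on lists T"
  using path_prob_time_nonneg sum_path_prob_time_le target_in_S by (intro summable_on_if_sums_bounded) blast+

lemma exists_max_below_V:
  assumes "\<And>y. y \<in> T \<Longrightarrow> g y \<le> b" and "0 < e" and "x \<in> T" and "0 \<le> g x - e * V x"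
  obtains x0 where "x0 \<in> T" and "\<And>y. y \<in> T \<Longrightarrow> g y - e * V y \<le> g x0 - e * V x0"
proof -
  define F where "F = {y \<in> T. V y \<le> b / e}"
  have "x \<in> F"
    using assms(1)[OF \<open>x \<in> T\<close>] assms(2-4) by (auto simp: F_def field_simps)
  define m where "m = Max ((\<lambda>y. g y - e * V y) ` F)"
  have "finite F"
    using finite_sublevel by (simp add: F_def)
  then have "m \<in> (\<lambda>y. g y - e * V y) ` F"
    unfolding m_def using \<open>x \<in> F\<close> by (intro Max_in) auto
  then obtain x0 where "x0 \<in> F" "m = g x0 - e * V x0"
    by blast
  have "g x - e * V x \<le> m"
    unfolding m_def using \<open>finite F\<close> \<open>x \<in> F\<close> by (intro Max_ge) auto
  have bound: "g y - e * V y \<le> m" if "y \<in> T" for y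
  proof (cases "y \<in> F")
    case True
    then show ?thesis
      using \<open>finite F\<close> by (simp add: m_def)
  next
    case False
    then have "b / e < V y"
      using that by (simp add: F_def)
    then have "b < e * V y"
      using \<open>0 < e\<close> by (simp add: field_simps)
    then have "g y - e * V y < 0"
      using assms(1)[OF that] by linarith
    also have "0 \<le> m"
      using \<open>g x - e * V x \<le> m\<close> assms(4) by linarith
    finally show ?thesis by simp
  qed
  show ?thesis
  proof (rule that)
    show "x0 \<in> T"
      using \<open>x0 \<in> F\<close> by (simp add: F_def)
    show "g y - e * V y \<le> g x0 - e * V x0" if "y \<in> T" for y
      using bound[OF that] \<open>m = g x0 - e * V x0\<close> by simp
  qed
qed

(* Maximum principle: if g > 0 somewhere, then g - e V attains a maximum on T for small e > 0,
   and averaging over one step at the maximiser contradicts the strict drift of V. *)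
lemma subharmonic_nonpos:
  assumes bounded: "\<And>y. y \<in> T \<Longrightarrow> g y \<le> b"
    and subharmonic: "\<And>y. y \<in> T \<Longrightarrow> g y \<le> (\<Sum>z\<in>succs y - {i}. P y z * g z)"
    and "x \<in> T"
  shows "g x \<le> 0"
proof (rule ccontr)
  assume "\<not> g x \<le> 0"
  define e where "e = g x / (V x + 1)"
  have "0 < e" "0 \<le> g x - e * V x"
    using \<open>\<not> g x \<le> 0\<close> V_nonneg[OF \<open>x \<in> T\<close>] by (auto simp: e_def field_simps)
  then obtain x0 where "x0 \<in> T" and max: "\<And>y. y \<in> T \<Longrightarrow> g y - e * V y \<le> g x0 - e * V x0"
    using exists_max_below_V[of g b e x, OF bounded] \<open>x \<in> T\<close> by blast
  let ?m = "g x0 - e * V x0"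
  have "0 \<le> ?m"
    using max[OF \<open>x \<in> T\<close>] \<open>0 \<le> g x - e * V x\<close> by simp
  have "g x0 \<le> (\<Sum>y\<in>succs x0 - {i}. P x0 y * g y)"
    using subharmonic \<open>x0 \<in> T\<close> by blast
  also have "\<dots> \<le> (\<Sum>y\<in>succs x0 - {i}. P x0 y * (?m + e * V y))"
  proof (intro sum_mono mult_left_mono)
    fix y assume "y \<in> succs x0 - {i}"
    then have "y \<in> T"
      using succs_subset \<open>x0 \<in> T\<close> by blast
    then show "g y \<le> ?m + e * V y"
      using max by fastforce
    show "0 \<le> P x0 y"
      using P_nonneg \<open>x0 \<in> T\<close> by blast
  qed
  also have "\<dots> = ?m * (\<Sum>y\<in>succs x0 - {i}. P x0 y) + e * (\<Sum>y\<in>succs x0 - {i}. P x0 y * V y)"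
    by (simp only: distrib_left sum.distrib sum_distrib_left mult_ac)
  also have "\<dots> \<le> ?m * 1 + e * (V x0 - c x0)"
  proof (intro add_mono mult_left_mono)
    show "(\<Sum>y\<in>succs x0 - {i}. P x0 y) \<le> 1"
      using sum_P_le_1 \<open>x0 \<in> T\<close> by blast
    show "(\<Sum>y\<in>succs x0 - {i}. P x0 y * V y) \<le> V x0 - c x0"
      using drift \<open>x0 \<in> T\<close> by fastforce
  qed (use \<open>0 \<le> ?m\<close> \<open>0 < e\<close> in auto)
  finally have "e * c x0 \<le> 0"
    by (simp add: right_diff_distrib)
  moreover have "0 < e * c x0"
    using \<open>0 < e\<close> c_pos \<open>x0 \<in> T\<close> by simp
  ultimately show False
    by linarith
qed

lemma hit_prob_target: "hit_prob i = 1"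
proof -
  have hit_ge_1: "1 - hit_prob y \<le> 0" if "y \<in> T" for y
  proof (rule subharmonic_nonpos[where g = "\<lambda>y. 1 - hit_prob y" and b = 1])
    fix x assume "x \<in> T"
    then have "(\<Sum>y\<in>succs x - {i}. P x y * (1 - hit_prob y))
               = (\<Sum>y\<in>succs x - {i}. P x y) - (\<Sum>y\<in>succs x - {i}. P x y * hit_prob y)"
      by (simp add: right_diff_distrib sum_subtractf)
    also have "\<dots> = 1 - hit_prob x"
      using row_sum_minus_target[of x] hit_prob_first_step[of x] \<open>x \<in> T\<close> by simp
    finally show "1 - hit_prob x \<le> (\<Sum>y\<in>succs x - {i}. P x y * (1 - hit_prob y))"
      by simp
  next
    fix x assume "x \<in> T"
    then show "1 - hit_prob x \<le> 1"
      using hit_prob_nonneg by simp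
  qed (use that in simp)
  have "(\<Sum>y\<in>succs i - {i}. P i y * hit_prob y) = (\<Sum>y\<in>succs i - {i}. P i y)"
  proof (rule sum.cong)
    fix y assume "y \<in> succs i - {i}"
    then have "y \<in> T"
      using succs_subset target_in_S by blast
    then show "P i y * hit_prob y = P i y"
      using hit_ge_1 hit_prob_le_1 by (simp add: order_antisym)
  qed simp
  then show ?thesis
    using hit_prob_first_step[OF target_in_S] row_sum_minus_target[OF target_in_S] by simp
qed

end

locale row_finite_generator =
  fixes S :: "nat set" and succs :: "nat \<Rightarrow> nat set" and Q :: "nat \<Rightarrow> nat \<Rightarrow> real"
  assumes finite_succs: "x \<in> S \<Longrightarrow> finite (succs x)"
    and succs_subset: "x \<in> S \<Longrightarrow> succs x \<subseteq> S"
    and Q_nonneg: "x \<in> S \<Longrightarrow> y \<noteq> x \<Longrightarrow> 0 \<le> Q x y"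
    and Q_outside_succs: "x \<in> S \<Longrightarrow> y \<notin> succs x \<Longrightarrow> Q x y = 0"
    and row_sum_zero: "x \<in> S \<Longrightarrow> (\<Sum>y\<in>succs x. Q x y) = 0"
    and diagonal_neg: "x \<in> S \<Longrightarrow> Q x x < 0"
begin

lemma diagonal_in_succs: "x \<in> S \<Longrightarrow> x \<in> succs x"
  using Q_outside_succs diagonal_neg by force

lemma jump_prob_eq: "x \<in> S \<Longrightarrow> jump_prob Q x y = (if y = x then 0 else Q x y / - Q x x)"
  using diagonal_neg[of x] by (simp add: jump_prob_def)

lemma sum_jump_prob:
  assumes "x \<in> S"
  shows "(\<Sum>y\<in>succs x. jump_prob Q x y * f y) = ((\<Sum>y\<in>succs x. Q x y * f y) - Q x x * f x) / - Q x x"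
proof -
  have "(\<Sum>y\<in>succs x. jump_prob Q x y * f y) = (\<Sum>y\<in>succs x - {x}. Q x y * f y) / - Q x x"
    using assms finite_succs[OF assms] diagonal_in_succs[OF assms]
    by (simp add: jump_prob_eq sum.remove sum_divide_distrib sum_negf)
  then show ?thesis
    using finite_succs[OF assms] diagonal_in_succs[OF assms] by (simp add: sum_diff1)
qed

lemma row_finite_chain_jump_prob: "i \<in> S \<Longrightarrow> row_finite_chain S succs (jump_prob Q) i"
proof
  fix x y assume "x \<in> S"
  then show "0 \<le> jump_prob Q x y"
    using Q_nonneg[of x y] diagonal_neg[of x] by (simp add: jump_prob_eq divide_nonneg_neg)
  show "y \<notin> succs x \<Longrightarrow> jump_prob Q x y = 0"
    using Q_outside_succs \<open>x \<in> S\<close> by (simp add: jump_prob_eq)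
  show "(\<Sum>y\<in>succs x. jump_prob Q x y) = 1"
    using sum_jump_prob[OF \<open>x \<in> S\<close>, of "\<lambda>_. 1"] row_sum_zero \<open>x \<in> S\<close> diagonal_neg[of x] by simp
qed (use finite_succs succs_subset in auto)

lemma jump_chain_drift:
  assumes "x \<in> S" and "V i = 0" and "(\<Sum>y\<in>succs x. Q x y * V y) \<le> -1"
  shows "inverse (- Q x x) + (\<Sum>y\<in>succs x - {i}. jump_prob Q x y * V y) \<le> V x"
proof -
  have q: "0 < - Q x x"
    using diagonal_neg[OF assms(1)] by simp
  have "(\<Sum>y\<in>succs x - {i}. jump_prob Q x y * V y) = (\<Sum>y\<in>succs x. jump_prob Q x y * V y)"
    using assms(2) finite_succs[OF assms(1)] by (simp add: sum_diff1)
  also have "\<dots> = ((\<Sum>y\<in>succs x. Q x y * V y) - Q x x * V x) / - Q x x"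
    by (rule sum_jump_prob[OF assms(1)])
  also have "\<dots> \<le> (-1 - Q x x * V x) / - Q x x"
    using assms(3) q by (intro divide_right_mono) auto
  also have "\<dots> = V x - inverse (- Q x x)"
    using q by (simp add: field_simps)
  finally show ?thesis
    by simp
qed

lemma excursion_time_eq:
  assumes "i \<in> S" and "set xs \<subseteq> S"
  shows "excursion_time Q i xs = ennreal (sum_list (map (\<lambda>x. inverse (- Q x x)) (i # xs)))"
proof -
  have "0 < - Q x x" if "x \<in> set (i # xs)" for x
    using that assms diagonal_neg by auto
  then show ?thesis
    unfolding excursion_time_def
    by (subst sum_list_ennreal[symmetric])
       (auto simp: inverse_ennreal intro!: arg_cong[where f = sum_list] intro: less_imp_le)
qed

theorem positive_recurrent_state_if_drift:
  assumes "i \<in> S" and "V i = 0" and V_nonneg: "\<And>x. x \<in> S \<Longrightarrow> 0 \<le> V x"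
    and finite_sublevel: "\<And>K. finite {x \<in> S. V x \<le> K}"
    and drift: "\<And>x. x \<in> S - {i} \<Longrightarrow> (\<Sum>y\<in>succs x. Q x y * V y) \<le> -1"
  shows "positive_recurrent_state Q S i"
proof -
  define c where "c = (\<lambda>x. inverse (- Q x x))"
  interpret row_finite_chain S succs "jump_prob Q" i
    using \<open>i \<in> S\<close> by (rule row_finite_chain_jump_prob)
  interpret foster_chain S succs "jump_prob Q" i c V
  proof unfold_locales
    show "finite {x \<in> S - {i}. V x \<le> K}" for K
      using finite_sublevel[of K] by (rule finite_subset[rotated]) auto
  qed (use jump_chain_drift \<open>V i = 0\<close> drift V_nonneg diagonal_neg in \<open>auto simp: c_def\<close>)
  have excursions: "excursions S i = lists T"
    by (auto simp: excursions_def)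
  have prob: "excursion_prob Q i xs = ennreal (path_prob i xs)" if "xs \<in> lists T" for xs
    unfolding excursion_prob_def using prod_list_ennreal_path_prob target_in_S that by blast
  have "return_prob Q S i = ennreal (hit_prob i)"
    unfolding return_prob_def hit_prob_def excursions
    using prob infsum_ennreal[OF summable_path_prob[OF target_in_S]] path_prob_nonneg[OF target_in_S]
    by (simp cong: infsum_cong)
  moreover have "(\<Sum>\<^sub>\<infinity>xs\<in>excursions S i. excursion_prob Q i xs * excursion_time Q i xs)
                 = ennreal (\<Sum>\<^sub>\<infinity>xs\<in>lists T. path_prob i xs * sum_list (map c (i # xs)))"
  proof -
    have "excursion_time Q i xs = ennreal (sum_list (map c (i # xs)))" if "xs \<in> lists T" for xs
      unfolding c_def by (rule excursion_time_eq[OF \<open>i \<in> S\<close>]) (use that in auto)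
    then have "excursion_prob Q i xs * excursion_time Q i xs
               = ennreal (path_prob i xs * sum_list (map c (i # xs)))" if "xs \<in> lists T" for xs
      using prob[OF that] path_prob_nonneg[OF target_in_S that] that by (simp add: ennreal_mult')
    then show ?thesis
      unfolding excursions using infsum_ennreal[OF summable_return_time path_prob_time_nonneg]
      by (simp cong: infsum_cong)
  qed
  ultimately show ?thesis
    using hit_prob_target by (simp add: positive_recurrent_state_def mean_return_time_def)
qed

end

lemma binomial_probabilities_sum:
  "(\<Sum>m\<le>n. of_nat (n choose m) * p ^ m * (1 - p) ^ (n - m)) = (1 :: 'a :: comm_ring_1)"
  using binomial_ring[of p "1 - p" n] by simp

lemma binomial_probabilities_mean:
  "(\<Sum>m\<le>n. of_nat (n choose m) * p ^ m * (1 - p) ^ (n - m) * of_nat m) = of_nat n * (p :: 'a :: comm_ring_1)"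
proof (cases n)
  case (Suc n')
  have "(\<Sum>m\<le>Suc n'. of_nat (Suc n' choose m) * p ^ m * (1 - p) ^ (Suc n' - m) * of_nat m)
        = (\<Sum>m\<le>n'. of_nat (Suc n' choose Suc m) * p ^ Suc m * (1 - p) ^ (n' - m) * of_nat (Suc m))"
    by (subst sum.atMost_Suc_shift) simp
  also have "\<dots> = (\<Sum>m\<le>n'. of_nat (Suc n') * p * (of_nat (n' choose m) * p ^ m * (1 - p) ^ (n' - m)))"
  proof (rule sum.cong)
    fix m
    have binomial: "of_nat (Suc n' choose Suc m) * of_nat (Suc m) = of_nat (Suc n') * (of_nat (n' choose m) :: 'a)"
      by (metis Suc_times_binomial mult.commute of_nat_mult)
    have "of_nat (Suc n' choose Suc m) * p ^ Suc m * (1 - p) ^ (n' - m) * of_nat (Suc m)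
          = (of_nat (Suc n' choose Suc m) * of_nat (Suc m)) * (p * (p ^ m * (1 - p) ^ (n' - m)))"
      by (simp only: power_Suc mult_ac)
    also have "\<dots> = of_nat (Suc n') * of_nat (n' choose m) * (p * (p ^ m * (1 - p) ^ (n' - m)))"
      by (simp only: binomial)
    also have "\<dots> = of_nat (Suc n') * p * (of_nat (n' choose m) * p ^ m * (1 - p) ^ (n' - m))"
      by (simp only: mult_ac)
    finally show "of_nat (Suc n' choose Suc m) * p ^ Suc m * (1 - p) ^ (n' - m) * of_nat (Suc m)
               = of_nat (Suc n') * p * (of_nat (n' choose m) * p ^ m * (1 - p) ^ (n' - m))" .
  qed simp
  also have "\<dots> = of_nat (Suc n') * p"
    by (simp add: binomial_probabilities_sum flip: sum_distrib_left)
  finally show ?thesis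
    using Suc by simp
qed simp

lemma sum_Qbar_below_shift:
  assumes "x = Suc n"
  shows "(\<Sum>k\<in>{1..<x}. Qbar p x k * f k)
         = p * (\<Sum>m<n. real (n choose m) * p ^ m * (1 - p) ^ (n - m) * f (Suc m))"
proof -
  have "(\<Sum>k\<in>{1..<x}. Qbar p x k * f k) = (\<Sum>m<n. Qbar p x (Suc m) * f (Suc m))"
    using assms sum.shift_bounds_Suc_ivl[of "\<lambda>k. Qbar p x k * f k" 0 n] by (simp add: atLeast0LessThan)
  also have "\<dots> = p * (\<Sum>m<n. real (n choose m) * p ^ m * (1 - p) ^ (n - m) * f (Suc m))"
    unfolding sum_distrib_left using assms by (intro sum.cong) (simp_all add: Qbar_def mult_ac)
  finally show ?thesis .
qed

lemma sum_Qbar_below: "1 \<le> x \<Longrightarrow> (\<Sum>k\<in>{1..<x}. Qbar p x k) = p - p ^ x"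
proof -
  assume "1 \<le> x"
  then obtain n where x: "x = Suc n"
    using not0_implies_Suc by fastforce
  have "(\<Sum>k\<in>{1..<x}. Qbar p x k) = p * (\<Sum>m<n. real (n choose m) * p ^ m * (1 - p) ^ (n - m))"
    using sum_Qbar_below_shift[OF x, where p = p and f = "\<lambda>_. 1"] by simp
  also have "(\<Sum>m<n. real (n choose m) * p ^ m * (1 - p) ^ (n - m)) = 1 - p ^ n"
    using binomial_probabilities_sum[of n p] by (simp add: lessThan_Suc_atMost[symmetric])
  finally show ?thesis
    using x by (simp add: algebra_simps)
qed

lemma sum_Qbar_below_mean:
  assumes "0 \<le> p" "p \<le> 1" "1 \<le> x"
  shows "(\<Sum>k\<in>{1..<x}. Qbar p x k * real k) \<le> p * ((real x - 1) * p + 1)"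
proof -
  obtain n where x: "x = Suc n"
    using assms(3) not0_implies_Suc by fastforce
  have "(\<Sum>m<n. real (n choose m) * p ^ m * (1 - p) ^ (n - m) * real (Suc m))
        \<le> (\<Sum>m\<le>n. real (n choose m) * p ^ m * (1 - p) ^ (n - m) * real (Suc m))"
    using assms by (intro sum_mono2) auto
  also have "\<dots> = real n * p + 1"
    using binomial_probabilities_sum[of n p] binomial_probabilities_mean[of n p]
    by (simp add: algebra_simps sum.distrib)
  finally show ?thesis
    using sum_Qbar_below_shift[OF x, where p = p and f = real] assms(1) x by (simp add: mult_left_mono)
qed

lemma Qbar_diagonal: "1 \<le> x \<Longrightarrow> Qbar p x x = p ^ x - (2 + real x) * p"
  by (simp add: Qbar_def)

lemma sum_Qbar_row:
  assumes "1 \<le> x"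
  shows "(\<Sum>y\<in>{1..x+1}. Qbar p x y * f y)
         = real (x + 1) * p * (f (x + 1) - f x) + (\<Sum>k\<in>{1..<x}. Qbar p x k * (f k - f x))"
proof -
  have diagonal: "Qbar p x x = - (real (x + 1) * p + (\<Sum>k\<in>{1..<x}. Qbar p x k))"
    using Qbar_diagonal[of x p, OF assms] sum_Qbar_below[OF assms, of p] by (simp add: algebra_simps)
  have up: "Qbar p x (x + 1) = real (x + 1) * p"
    using assms by (simp add: Qbar_def) linarith
  have "{1..x+1} = insert x (insert (x + 1) {1..<x})"
    using assms by auto
  then have "(\<Sum>y\<in>{1..x+1}. Qbar p x y * f y)
             = Qbar p x x * f x + Qbar p x (x + 1) * f (x + 1) + (\<Sum>k\<in>{1..<x}. Qbar p x k * f k)"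
    by simp
  also have "\<dots> = real (x + 1) * p * (f (x + 1) - f x) + (\<Sum>k\<in>{1..<x}. Qbar p x k * (f k - f x))"
    unfolding diagonal up by (simp add: algebra_simps sum_subtractf sum_distrib_left)
  finally show ?thesis .
qed

lemma row_finite_generator_Qbar:
  assumes "0 < p" "p < 1"
  shows "row_finite_generator {1..} (\<lambda>x. {1..x+1}) (Qbar p)"
proof
  fix x y assume "x \<in> {1::nat..}"
  then have "1 \<le> x" by simp
  show "0 \<le> Qbar p x y" if "y \<noteq> x"
    using assms that by (simp add: Qbar_def)
  show "y \<notin> {1..x+1} \<Longrightarrow> Qbar p x y = 0"
    by (auto simp: Qbar_def)
  show "(\<Sum>y\<in>{1..x+1}. Qbar p x y) = 0"
    using sum_Qbar_row[OF \<open>1 \<le> x\<close>, of p "\<lambda>_. 1"] by simp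
  have "p ^ x \<le> p"
    using assms \<open>1 \<le> x\<close> power_decreasing[of 1 x p] by simp
  moreover have "p < (2 + real x) * p"
    using assms by simp
  ultimately show "Qbar p x x < 0"
    using Qbar_diagonal[of x p, OF \<open>1 \<le> x\<close>] by simp
qed auto

lemma ln_Suc_minus_ln_le: "1 \<le> x \<Longrightarrow> ln (real (x + 1)) - ln (real x) \<le> 1 / real x"
proof -
  assume "1 \<le> x"
  then have "ln (real (x + 1) / real x) \<le> real (x + 1) / real x - 1"
    by (intro ln_le_minus_one) auto
  then show ?thesis
    using \<open>1 \<le> x\<close> by (simp add: ln_div field_simps)
qed

lemma ln_Suc_minus_ln_le_1: "1 \<le> x \<Longrightarrow> ln (real (x + 1)) - ln (real x) \<le> 1"
  using ln_Suc_minus_ln_le[of x] by (simp add: order_trans[of _ "1 / real x"])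

lemma Qbar_lower_bound:
  assumes "0 \<le> p" "p \<le> 1" "1 \<le> k" "k < x" "x \<le> n"
  shows "p ^ k * (1 - p) ^ n \<le> Qbar p x k"
proof -
  have "1 \<le> (x - 1) choose (k - 1)"
    using assms(3,4) by (simp add: Suc_le_eq zero_less_binomial_iff)
  then have "1 \<le> real ((x - 1) choose (k - 1))"
    by simp
  have "(1 - p) ^ n \<le> (1 - p) ^ (x - k)"
    using assms by (intro power_decreasing) auto
  then have "p ^ k * (1 - p) ^ n \<le> 1 * (p ^ k * (1 - p) ^ (x - k))"
    using assms(1) by (simp add: mult_left_mono)
  also have "\<dots> \<le> real ((x - 1) choose (k - 1)) * (p ^ k * (1 - p) ^ (x - k))"
    using \<open>1 \<le> real _\<close> assms(1,2) by (intro mult_right_mono) auto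
  also have "\<dots> = Qbar p x k"
    using assms(3,4) by (simp add: Qbar_def mult_ac)
  finally show ?thesis .
qed

lemma power_le_inverse:
  assumes "0 \<le> p" "p \<le> 1 / 2" "1 \<le> x"
  shows "p ^ x \<le> 1 / real x"
proof -
  have "p ^ x \<le> (1 / 2) ^ x"
    using assms by (intro power_mono) auto
  also have "\<dots> = 1 / 2 ^ x"
    by (simp add: power_one_over)
  also have "\<dots> \<le> 1 / real x"
    using assms(3) less_exp[of x] by (intro divide_left_mono) (auto simp: of_nat_less_iff[symmetric])
  finally show ?thesis .
qed

locale Qbar_log_lyapunov =
  fixes p :: real and i N :: nat and A L B :: real
  assumes p_pos: "0 < p" and p_less: "p < exp (-1)"
    and i_pos: "1 \<le> i" and i_less_N: "i < N"
    and A_large: "2 \<le> A * (- p * (1 + ln p))"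
    and L_eq: "p * L = 1 + real i * p * A"
    and B_large: "1 + real N * p * A + p * L * real i \<le> p ^ i * (1 - p) ^ N * B"
    and N_large: "\<And>x. N \<le> x \<Longrightarrow> 2 * (2 - ln p) \<le> - p * (1 + ln p) * real x"
    and N_large_ln: "\<And>x. N \<le> x \<Longrightarrow> A * (ln (real i) + 1 - ln p) + L * real i \<le> A * ln (real x)"
begin

(* real (i - y) is the positive part (i - y)_+, by truncated subtraction on nat *)
definition W :: "nat \<Rightarrow> real" where
  "W y = A * ln (real y) + L * real (i - y) + B"

definition U :: "nat \<Rightarrow> real" where
  "U y = (if y = i then 0 else W y)"

lemma ln_p_less: "ln p < -1"
  using ln_less_cancel_iff[of p "exp (-1)"] p_pos p_less by simp

lemma p_le_half: "p \<le> 1 / 2"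
proof -
  have "2 \<le> exp (1 :: real)"
    using exp_ge_add_one_self[of 1] by simp
  then have "exp (-1 :: real) \<le> 1 / 2"
    by (simp add: exp_minus field_simps)
  then show ?thesis
    using p_less by simp
qed

lemma A_pos: "0 < A"
proof -
  have "0 < - p * (1 + ln p)"
    using p_pos ln_p_less by (simp add: mult_pos_neg)
  moreover have "0 < A * (- p * (1 + ln p))"
    using A_large by linarith
  ultimately show ?thesis
    using zero_less_mult_pos2 by blast
qed

lemma L_pos: "0 < L"
proof -
  have "0 < p * L"
    unfolding L_eq using p_pos A_pos by (simp add: add_pos_nonneg)
  then show ?thesis
    using p_pos zero_less_mult_pos by blast
qed

lemma B_pos: "0 < B"
proof -
  have "0 < p ^ i * (1 - p) ^ N"
    using p_pos p_le_half by simp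
  moreover have "0 < 1 + real N * p * A + p * L * real i"
    using p_pos A_pos L_pos by (intro add_pos_nonneg) auto
  then have "0 < p ^ i * (1 - p) ^ N * B"
    using B_large by linarith
  ultimately show ?thesis
    using zero_less_mult_pos by blast
qed

lemma W_ge_B: "1 \<le> y \<Longrightarrow> B \<le> W y"
  using A_pos L_pos by (simp add: W_def)

lemma U_nonneg: "1 \<le> y \<Longrightarrow> 0 \<le> U y"
  using W_ge_B[of y] B_pos by (simp add: U_def)

lemma U_le_W: "1 \<le> y \<Longrightarrow> U y \<le> W y"
  using W_ge_B[of y] B_pos by (auto simp: U_def)

lemma W_diff: "W k - W x = A * (ln (real k) - ln (real x)) + L * (real (i - k) - real (i - x))"
  by (simp add: W_def algebra_simps)

lemma finite_U_sublevel: "finite {x \<in> {1..}. U x \<le> K}"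
proof (rule finite_subset)
  show "{x \<in> {1..}. U x \<le> K} \<subseteq> insert i {..nat \<lceil>exp (K / A)\<rceil>}"
  proof
    fix x assume "x \<in> {x \<in> {1..}. U x \<le> K}"
    then have "1 \<le> x" "U x \<le> K"
      by auto
    show "x \<in> insert i {..nat \<lceil>exp (K / A)\<rceil>}"
    proof (cases "x = i")
      case False
      moreover have "0 \<le> L * real (i - x)"
        using L_pos by simp
      ultimately have "A * ln (real x) \<le> K"
        using \<open>U x \<le> K\<close> B_pos by (simp add: U_def W_def)
      then have "ln (real x) \<le> K / A"
        using A_pos by (simp add: field_simps)
      then have "real x \<le> exp (K / A)"
        using \<open>1 \<le> x\<close> by (metis exp_le_cancel_iff exp_ln of_nat_0_less_iff less_le_trans zero_less_one of_nat_1 of_nat_le_iff)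
      then show ?thesis
        by (simp add: le_nat_iff) linarith
    qed simp
  qed
qed simp

lemma Qbar_below_nonneg: "k < x \<Longrightarrow> 0 \<le> Qbar p x k"
  using p_pos p_le_half by (simp add: Qbar_def)

lemma sum_Qbar_below_mono:
  "(\<And>k. k \<in> {1..<x} \<Longrightarrow> f k \<le> g k) \<Longrightarrow> (\<Sum>k\<in>{1..<x}. Qbar p x k * f k) \<le> (\<Sum>k\<in>{1..<x}. Qbar p x k * g k)"
  by (intro sum_mono mult_left_mono) (auto simp: Qbar_below_nonneg)

lemma U_Suc_diff_le_below:
  assumes "1 \<le> x" "x < i"
  shows "U (x + 1) - U x \<le> A - L"
proof -
  have "U (x + 1) - U x \<le> W (x + 1) - W x"
    using U_le_W[of "x + 1"] assms by (simp add: U_def)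
  also have "\<dots> = A * (ln (real (x + 1)) - ln (real x)) - L"
    using assms by (simp add: W_diff of_nat_diff)
  also have "\<dots> \<le> A * 1 - L"
    using ln_Suc_minus_ln_le_1[OF assms(1)] A_pos by (intro diff_right_mono mult_left_mono) auto
  finally show ?thesis
    by simp
qed

lemma U_Suc_diff_le:
  assumes "i < x"
  shows "U (x + 1) - U x \<le> A / real x"
proof -
  have "U (x + 1) - U x = A * (ln (real (x + 1)) - ln (real x))"
    using assms by (simp add: U_def W_diff)
  also have "\<dots> \<le> A * (1 / real x)"
    using ln_Suc_minus_ln_le[of x] assms i_pos A_pos by (intro mult_left_mono) auto
  finally show ?thesis
    by simp
qed

lemma U_diff_le_below:
  assumes "x < i" "k \<in> {1..<x}"
  shows "U k - U x \<le> L * (real x - 1)"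
proof -
  have "U k - U x = A * (ln (real k) - ln (real x)) + L * (real x - real k)"
    using assms by (simp add: U_def W_diff of_nat_diff)
  also have "\<dots> \<le> 0 + L * (real x - 1)"
    using assms(2) A_pos L_pos by (intro add_mono mult_left_mono) (auto simp: mult_le_0_iff)
  finally show ?thesis
    by simp
qed

lemma U_diff_le_above:
  assumes "i < x" "k \<in> {1..<x}"
  shows "U k - U x \<le> L * real i - (if k = i then B else 0)"
proof (cases "k = i")
  case True
  have "0 \<le> L * real i"
    using L_pos by simp
  then show ?thesis
    using True W_ge_B[of x] assms by (simp add: U_def)
next
  case False
  have "U k - U x = A * (ln (real k) - ln (real x)) + L * real (i - k)"
    using assms False by (simp add: U_def W_diff)
  also have "\<dots> \<le> 0 + L * real i"
    using assms(2) A_pos L_pos by (intro add_mono mult_left_mono) (auto simp: mult_le_0_iff)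
  finally show ?thesis
    using False by simp
qed

lemma U_diff_le_above_N:
  assumes "N \<le> x" "k \<in> {1..<x}"
  shows "U k - U x \<le> A * (ln p - 1) + A / (p * real x) * real k"
proof -
  have "i < x" and x_pos: "0 < real x"
    using assms(1) i_less_N by auto
  have "U k - U x \<le> W k - W x"
    using U_le_W[of k] assms(2) \<open>i < x\<close> by (simp add: U_def)
  also have "\<dots> \<le> A * (ln p + real k / (p * real x) - 1)"
  proof (cases "i \<le> k")
    case True
    have "ln (real k / (p * real x)) \<le> real k / (p * real x) - 1"
      using assms(2) p_pos x_pos by (intro ln_le_minus_one) simp
    then have "ln (real k) - ln (real x) \<le> ln p + real k / (p * real x) - 1"
      using assms(2) p_pos x_pos by (simp add: ln_div ln_mult)
    then show ?thesis
      using True \<open>i < x\<close> A_pos by (simp add: W_diff mult_left_mono)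
  next
    case False
    have "W k - W x = A * (ln (real k) - ln (real x)) + L * real (i - k)"
      using \<open>i < x\<close> by (simp add: W_diff)
    also have "\<dots> \<le> A * (ln (real i) - ln (real x)) + L * real i"
      using False assms(2) A_pos L_pos by (intro add_mono mult_left_mono) auto
    also have "\<dots> \<le> A * (ln p - 1)"
      using N_large_ln[OF assms(1)] by (simp add: algebra_simps)
    also have "\<dots> \<le> A * (ln p + real k / (p * real x) - 1)"
      using A_pos p_pos x_pos by (intro mult_left_mono) auto
    finally show ?thesis .
  qed
  finally show ?thesis
    by (simp add: algebra_simps)
qed

lemma drift_below_target:
  assumes "1 \<le> x" "x < i"
  shows "1 + real (x + 1) * p * (U (x + 1) - U x) + (\<Sum>k\<in>{1..<x}. Qbar p x k * (U k - U x)) \<le> 0"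
proof -
  have "real (x + 1) * p * (U (x + 1) - U x) \<le> real (x + 1) * p * (A - L)"
    using U_Suc_diff_le_below[OF assms] p_pos by (intro mult_left_mono) auto
  moreover have "(\<Sum>k\<in>{1..<x}. Qbar p x k * (U k - U x)) \<le> (\<Sum>k\<in>{1..<x}. Qbar p x k) * (L * (real x - 1))"
    using sum_Qbar_below_mono[OF U_diff_le_below[OF assms(2)]] by (simp add: sum_distrib_right)
  moreover have "(\<Sum>k\<in>{1..<x}. Qbar p x k) * (L * (real x - 1)) \<le> p * (L * (real x - 1))"
    using sum_Qbar_below[OF assms(1), of p] p_pos L_pos assms(1) by (intro mult_right_mono) auto
  moreover have "1 + real (x + 1) * p * (A - L) + p * (L * (real x - 1)) = 1 + real (x + 1) * p * A - 2 * (p * L)"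
    by (simp add: algebra_simps)
  moreover have "real (x + 1) * p * A \<le> real i * p * A"
    using assms p_pos A_pos by (intro mult_right_mono) auto
  moreover have "0 \<le> real i * p * A"
    using p_pos A_pos by simp
  ultimately show ?thesis
    using L_eq by linarith
qed

lemma drift_between:
  assumes "i < x" "x < N"
  shows "1 + real (x + 1) * p * (U (x + 1) - U x) + (\<Sum>k\<in>{1..<x}. Qbar p x k * (U k - U x)) \<le> 0"
proof -
  have "1 \<le> x"
    using assms i_pos by simp
  have "A / real x \<le> A"
    using \<open>1 \<le> x\<close> A_pos by (simp add: divide_le_eq mult_le_cancel_left1)
  then have "U (x + 1) - U x \<le> A"
    using U_Suc_diff_le[OF assms(1)] by linarith
  then have "real (x + 1) * p * (U (x + 1) - U x) \<le> real (x + 1) * p * A"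
    using p_pos by (simp add: mult_left_mono)
  moreover have "real (x + 1) * p * A \<le> real N * p * A"
    using assms p_pos A_pos by (intro mult_right_mono) auto
  moreover have "(\<Sum>k\<in>{1..<x}. Qbar p x k * (U k - U x))
                 \<le> (\<Sum>k\<in>{1..<x}. Qbar p x k * (L * real i - (if k = i then B else 0)))"
    using sum_Qbar_below_mono[OF U_diff_le_above[OF assms(1)]] .
  moreover have "\<dots> = (\<Sum>k\<in>{1..<x}. Qbar p x k) * (L * real i) - Qbar p x i * B"
  proof -
    have "(\<Sum>k\<in>{1..<x}. Qbar p x k * (L * real i - (if k = i then B else 0)))
          = (\<Sum>k\<in>{1..<x}. Qbar p x k * (L * real i)) - (\<Sum>k\<in>{1..<x}. if k = i then Qbar p x k * B else 0)"
      unfolding sum_subtractf[symmetric] by (rule sum.cong) (auto simp: right_diff_distrib)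
    then show ?thesis
      using assms i_pos by (simp add: sum.delta sum_distrib_right)
  qed
  moreover have "(\<Sum>k\<in>{1..<x}. Qbar p x k) * (L * real i) \<le> p * (L * real i)"
    using sum_Qbar_below[OF \<open>1 \<le> x\<close>, of p] p_pos L_pos by (intro mult_right_mono) auto
  moreover have "p ^ i * (1 - p) ^ N * B \<le> Qbar p x i * B"
    using p_pos p_le_half i_pos assms B_pos by (intro mult_right_mono Qbar_lower_bound) auto
  ultimately show ?thesis
    using B_large by (simp add: algebra_simps)
qed

lemma sum_Qbar_U_diff_above_N:
  assumes "N \<le> x"
  shows "(\<Sum>k\<in>{1..<x}. Qbar p x k * (U k - U x))
         \<le> A * (ln p - 1) * (p - p ^ x) + A / (p * real x) * (p * ((real x - 1) * p + 1))"
proof -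
  have "1 \<le> x" and x_pos: "0 < real x"
    using assms i_less_N i_pos by auto
  have "(\<Sum>k\<in>{1..<x}. Qbar p x k * (U k - U x))
        \<le> (\<Sum>k\<in>{1..<x}. Qbar p x k * (A * (ln p - 1) + A / (p * real x) * real k))"
    by (rule sum_Qbar_below_mono[OF U_diff_le_above_N[OF assms]])
  also have "\<dots> = A * (ln p - 1) * (\<Sum>k\<in>{1..<x}. Qbar p x k)
                  + A / (p * real x) * (\<Sum>k\<in>{1..<x}. Qbar p x k * real k)"
    by (simp add: distrib_left sum.distrib sum_distrib_left mult_ac)
  also have "\<dots> \<le> A * (ln p - 1) * (p - p ^ x) + A / (p * real x) * (p * ((real x - 1) * p + 1))"
  proof -
    have "(\<Sum>k\<in>{1..<x}. Qbar p x k * real k) \<le> p * ((real x - 1) * p + 1)"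
      using sum_Qbar_below_mean[of p x] p_pos p_le_half \<open>1 \<le> x\<close> by simp
    moreover have "0 \<le> A / (p * real x)"
      using A_pos p_pos x_pos by simp
    ultimately show ?thesis
      unfolding sum_Qbar_below[OF \<open>1 \<le> x\<close>, of p] by (intro add_left_mono mult_left_mono)
  qed
  finally show ?thesis .
qed

lemma drift_above_N:
  assumes "N \<le> x"
  shows "1 + real (x + 1) * p * (U (x + 1) - U x) + (\<Sum>k\<in>{1..<x}. Qbar p x k * (U k - U x)) \<le> 0"
proof -
  have "i < x" "1 \<le> x" and x_pos: "0 < real x"
    using assms i_less_N i_pos by auto
  have "real (x + 1) * p * (U (x + 1) - U x) \<le> real (x + 1) * p * (A / real x)"
    using U_Suc_diff_le[OF \<open>i < x\<close>] p_pos by (intro mult_left_mono) auto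
  moreover have "real (x + 1) * p * (A / real x)
                 + (A * (ln p - 1) * (p - p ^ x) + A / (p * real x) * (p * ((real x - 1) * p + 1)))
                 = A * (p * (1 + ln p) + 1 / real x + p ^ x * (1 - ln p))"
    using x_pos p_pos by (simp add: field_simps)
  moreover have "A * (p * (1 + ln p) + 1 / real x + p ^ x * (1 - ln p)) \<le> -1"
  proof -
    have "p ^ x * (1 - ln p) \<le> (1 / real x) * (1 - ln p)"
      using power_le_inverse[OF _ p_le_half \<open>1 \<le> x\<close>] p_pos ln_p_less by (intro mult_right_mono) auto
    moreover have "(2 - ln p) / real x = 1 / real x + (1 / real x) * (1 - ln p)"
      by (simp add: add_divide_distrib[symmetric])
    moreover have "(2 - ln p) / real x \<le> - p * (1 + ln p) / 2"
      using N_large[OF assms] x_pos by (simp add: field_simps)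
    ultimately have "p * (1 + ln p) + 1 / real x + p ^ x * (1 - ln p) \<le> p * (1 + ln p) / 2"
      by linarith
    then have "A * (p * (1 + ln p) + 1 / real x + p ^ x * (1 - ln p)) \<le> A * (p * (1 + ln p) / 2)"
      using A_pos by (simp add: mult_left_mono)
    also have "\<dots> \<le> -1"
      using A_large by (simp add: algebra_simps)
    finally show ?thesis .
  qed
  ultimately show ?thesis
    using sum_Qbar_U_diff_above_N[OF assms] by linarith
qed

lemma drift:
  assumes "1 \<le> x" "x \<noteq> i"
  shows "(\<Sum>y\<in>{1..x+1}. Qbar p x y * U y) \<le> -1"
proof -
  consider "x < i" | "i < x \<and> x < N" | "N \<le> x"
    using assms(2) by linarith
  then have "1 + real (x + 1) * p * (U (x + 1) - U x) + (\<Sum>k\<in>{1..<x}. Qbar p x k * (U k - U x)) \<le> 0"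
    by cases (use drift_below_target[OF assms(1)] drift_between drift_above_N in auto)
  then show ?thesis
    using sum_Qbar_row[OF assms(1), of p U] by simp
qed

lemma positive_recurrent_state_Qbar: "positive_recurrent_state (Qbar p) {1..} i"
proof -
  interpret row_finite_generator "{1..}" "\<lambda>x. {1..x+1}" "Qbar p"
    using p_pos p_le_half by (intro row_finite_generator_Qbar) auto
  show ?thesis
  proof (rule positive_recurrent_state_if_drift[where V = U])
    show "i \<in> {1..}" "U i = 0"
      using i_pos by (simp_all add: U_def)
    show "0 \<le> U x" if "x \<in> {1..}" for x
      using U_nonneg that by simp
    show "(\<Sum>y\<in>{1..x+1}. Qbar p x y * U y) \<le> -1" if "x \<in> {1..} - {i}" for x
      using drift that by simp
  qed (rule finite_U_sublevel)
qed

end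

lemma Qbar_log_lyapunov_exists:
  assumes "0 < p" and "p < exp (-1)" and "1 \<le> i"
  obtains N A L B where "Qbar_log_lyapunov p i N A L B"
proof -
  define \<kappa> where "\<kappa> = - p * (1 + ln p)"
  have "ln p < -1"
    using ln_less_cancel_iff[of p "exp (-1)"] assms by simp
  then have "0 < \<kappa>"
    using assms(1) by (simp add: \<kappa>_def mult_pos_neg)
  define A where "A = 2 / \<kappa>"
  define L where "L = (1 + real i * p * A) / p"
  have "0 < A"
    using \<open>0 < \<kappa>\<close> by (simp add: A_def)
  have "\<forall>\<^sub>F x in sequentially. i < x \<and> 2 * (2 - ln p) \<le> \<kappa> * real x
          \<and> A * (ln (real i) + 1 - ln p) + L * real i \<le> A * ln (real x)"
  proof (intro eventually_conj)
    show "\<forall>\<^sub>F x in sequentially. i < x"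
      by simp
    have "\<forall>\<^sub>F x in sequentially. 2 * (2 - ln p) / \<kappa> \<le> real x"
      using filterlim_real_sequentially by (simp add: filterlim_at_top)
    then show "\<forall>\<^sub>F x in sequentially. 2 * (2 - ln p) \<le> \<kappa> * real x"
      by eventually_elim (use \<open>0 < \<kappa>\<close> in \<open>simp add: field_simps\<close>)
    have "\<forall>\<^sub>F x in sequentially. (A * (ln (real i) + 1 - ln p) + L * real i) / A \<le> ln (real x)"
      using filterlim_compose[OF ln_at_top filterlim_real_sequentially] by (simp add: filterlim_at_top)
    then show "\<forall>\<^sub>F x in sequentially. A * (ln (real i) + 1 - ln p) + L * real i \<le> A * ln (real x)"
      by eventually_elim (use \<open>0 < A\<close> in \<open>simp add: field_simps\<close>)
  qed
  then obtain N where N: "\<And>x. N \<le> x \<Longrightarrow> i < x \<and> 2 * (2 - ln p) \<le> \<kappa> * real x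
                            \<and> A * (ln (real i) + 1 - ln p) + L * real i \<le> A * ln (real x)"
    by (auto simp: eventually_sequentially)
  define B where "B = (1 + real N * p * A + p * L * real i) / (p ^ i * (1 - p) ^ N)"
  have "p < 1"
    using assms(2) exp_less_one_iff[of "-1"] by linarith
  then have "0 < p ^ i * (1 - p) ^ N"
    using assms(1) by simp
  have "Qbar_log_lyapunov p i N A L B"
  proof
    have "A * (- p * (1 + ln p)) = 2"
      unfolding \<kappa>_def[symmetric] A_def using \<open>0 < \<kappa>\<close> by simp
    then show "2 \<le> A * (- p * (1 + ln p))"
      by simp
    show "p * L = 1 + real i * p * A"
      using assms(1) by (simp add: L_def)
    have "p ^ i * (1 - p) ^ N \<noteq> 0"
      using \<open>0 < p ^ i * (1 - p) ^ N\<close> by linarith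
    then show "1 + real N * p * A + p * L * real i \<le> p ^ i * (1 - p) ^ N * B"
      unfolding B_def by simp
    show "2 * (2 - ln p) \<le> - p * (1 + ln p) * real x" if "N \<le> x" for x
      using N[OF that] by (simp add: \<kappa>_def)
  qed (use assms N in auto)
  then show ?thesis
    by (rule that)
qed

theorem corollary7:
  fixes p :: real
  assumes "0 < p" and "p < exp (-1)"
  shows "positive_recurrent (Qbar p) {1..}"
  unfolding positive_recurrent_def
proof
  fix i :: nat assume "i \<in> {1..}"
  then obtain N A L B where "Qbar_log_lyapunov p i N A L B"
    using Qbar_log_lyapunov_exists assms by (metis atLeast_iff)
  then show "positive_recurrent_state (Qbar p) {1..} i"
    by (rule Qbar_log_lyapunov.positive_recurrent_state_Qbar)
qed

end
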